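(* Let $\mathcal W$ be a monotonic game on $[n]$, $i\neq j$ players, and $\hat{\mathcal W}$ the game obtained by imposing a symmetric weak quarrel between $i$ and $j$. Then the Shapley–Shubik index satisfies $\hat\psi^{SS}_i\le\psi^{SS}_i$ and $\hat\psi^{SS}_j\le\psi^{SS}_j$, where $\psi^{SS}$ and $\hat\psi^{SS}$ denote the index computed in $\mathcal W$ and $\hat{\mathcal W}$ respectively.
   Context: Players are $[n]=\{1,\dots,n\}$. A binary voting game on $[n]$ is identified with its collection $\mathcal W\subseteq 2^{[n]}$ of winning sets ($S\in\mathcal W$ means the division in which exactly the members of $S$ vote YES has outcome YES). It is monotonic if $T\subseteq S$ and $T\in\mathcal W$ imply $S\in\mathcal W$. Player $i$ is YES-decisive for $S$ in a game $\mathcal W$ if $i\in S$, $S\in\mathcal W$ and $S\setminus\{i\}\notin\mathcal W$. Symmetric weak quarrel between $i$ and $j$: for every $S\subseteq[n]\setminus\{i,j\}$, $S\cup\{i,j\}\in\hat{\mathcal W}\iff (S\cup\{i\}\in\mathcal W\text{ or }S\cup\{j\}\in\mathcal W)$; $S\in\hat{\mathcal W}\iff (S\cup\{i\}\in\mathcal W\text{ and }S\cup\{j\}\in\mathcal W)$; $S\cup\{i\}\in\hat{\mathcal W}\iff S\cup\{i\}\in\mathcal W$; $S\cup\{j\}\in\hat{\mathcal W}\iff S\cup\{j\}\in\mathcal W$. Shapley–Shubik index: for an ordering $\sigma=(\sigma_1,\dots,\sigma_n)$ of $[n]$, player $i$ is pivotal in $\sigma$ if $\sigma_k=i$ and $i$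 is YES-decisive for $\{\sigma_1,\dots,\sigma_k\}$; then $\psi^{SS}_i=\frac{1}{n!}\#\{\sigma: i\text{ is pivotal in }\sigma\}$. *)

theory Defs
  imports Complex_Main
begin

text \<open>Players are {1..n}; a game is its collection of winning sets (subsets of {1..n}).\<close>

definition monotonic_game :: "nat \<Rightarrow> nat set set \<Rightarrow> bool" where
  "monotonic_game n W \<longleftrightarrow> W \<subseteq> Pow {1..n} \<and>
     (\<forall>S T. T \<subseteq> S \<and> S \<subseteq> {1..n} \<and> T \<in> W \<longrightarrow> S \<in> W)"

definition yes_decisive :: "nat set set \<Rightarrow> nat \<Rightarrow> nat set \<Rightarrow> bool" where
  "yes_decisive W i S \<longleftrightarrow> i \<in> S \<and> S \<in> W \<and> S - {i} \<notin> W"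

definition sym_weak_quarrel :: "nat \<Rightarrow> nat set set \<Rightarrow> nat \<Rightarrow> nat \<Rightarrow> nat set set" where
  "sym_weak_quarrel n W i j = {T. T \<subseteq> {1..n} \<and>
     (let S = T - {i, j} in
       (if i \<in> T \<and> j \<in> T then (S \<union> {i} \<in> W \<or> S \<union> {j} \<in> W)
        else if i \<notin> T \<and> j \<notin> T then (S \<union> {i} \<in> W \<and> S \<union> {j} \<in> W)
        else T \<in> W))}"

definition orderings :: "nat \<Rightarrow> nat list set" where
  "orderings n = {xs. distinct xs \<and> set xs = {1..n}}"

definition pivotal :: "nat set set \<Rightarrow> nat \<Rightarrow> nat list \<Rightarrow> bool" where
  "pivotal W i xs \<longleftrightarrow> (\<exists>k < length xs. xs ! k = i \<and> yes_decisive W i (set (take (Suc k) xs)))"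

definition shapley_shubik :: "nat \<Rightarrow> nat set set \<Rightarrow> nat \<Rightarrow> real" where
  "shapley_shubik n W i = real (card {xs \<in> orderings n. pivotal W i xs}) / real (fact n)"

end

theory Submission
  imports Defs
begin

text \<open>The index only counts orderings in which i is pivotal, so it suffices that every coalition
  P for which i is decisive in the quarrel game is also one for which i is decisive in W.
  If j is in P, the quarrel keeps the outcome of P - {i} and lets P win only if P - {i} or
  P - {j} wins in W; as P - {i} loses, P - {j} wins, so P wins by monotonicity. If j is not in P,
  the outcome of P is kept, and P - {i} loses only if P or P - {i} + {j} loses in W, which by
  monotonicity forces P - {i} to lose in W.\<close>

lemma sym_weak_quarrel_commute: "sym_weak_quarrel n W i j = sym_weak_quarrel n W j i"
  unfolding sym_weak_quarrel_def Let_def by (auto simp: insert_commute)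

lemma mem_sym_weak_quarrel_both:
  assumes "T \<subseteq> {1..n}" "i \<in> T" "j \<in> T" "i \<noteq> j"
  shows "T \<in> sym_weak_quarrel n W i j \<longleftrightarrow> T - {j} \<in> W \<or> T - {i} \<in> W"
proof -
  have "(T - {i, j}) \<union> {i} = T - {j}" "(T - {i, j}) \<union> {j} = T - {i}"
    using assms(2-4) by auto
  then show ?thesis
    using assms unfolding sym_weak_quarrel_def Let_def by auto
qed

lemma mem_sym_weak_quarrel_neither:
  assumes "T \<subseteq> {1..n}" "i \<notin> T" "j \<notin> T"
  shows "T \<in> sym_weak_quarrel n W i j \<longleftrightarrow> insert i T \<in> W \<and> insert j T \<in> W"
  using assms unfolding sym_weak_quarrel_def Let_def by auto

lemma mem_sym_weak_quarrel_one:
  assumes "T \<subseteq> {1..n}" "i \<in> T \<longleftrightarrow> j \<notin> T"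
  shows "T \<in> sym_weak_quarrel n W i j \<longleftrightarrow> T \<in> W"
  using assms unfolding sym_weak_quarrel_def Let_def by auto

lemma monotonic_gameD:
  "monotonic_game n W \<Longrightarrow> T \<in> W \<Longrightarrow> T \<subseteq> S \<Longrightarrow> S \<subseteq> {1..n} \<Longrightarrow> S \<in> W"
  unfolding monotonic_game_def by blast

lemma yes_decisive_sym_weak_quarrel_imp:
  assumes mon: "monotonic_game n W" and "j \<in> {1..n}" and "i \<noteq> j"
    and P: "P \<subseteq> {1..n}" and dec: "yes_decisive (sym_weak_quarrel n W i j) i P"
  shows "yes_decisive W i P"
proof -
  have iP: "i \<in> P" and win: "P \<in> sym_weak_quarrel n W i j"
    and lose: "P - {i} \<notin> sym_weak_quarrel n W i j"
    using dec unfolding yes_decisive_def by auto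
  have Pi: "P - {i} \<subseteq> {1..n}" using P by blast
  show ?thesis
  proof (cases "j \<in> P")
    case True
    have "P - {i} \<notin> W"
      using lose mem_sym_weak_quarrel_one[OF Pi, of i j W] True \<open>i \<noteq> j\<close> by auto
    moreover have "P - {j} \<in> W \<or> P - {i} \<in> W"
      using win mem_sym_weak_quarrel_both[OF P iP True \<open>i \<noteq> j\<close>] by blast
    ultimately have "P - {j} \<in> W" by blast
    then have "P \<in> W" by (rule monotonic_gameD[OF mon _ _ P]) blast
    with \<open>P - {i} \<notin> W\<close> iP show ?thesis unfolding yes_decisive_def by blast
  next
    case False
    have "P \<in> W"
      using win mem_sym_weak_quarrel_one[OF P, of i j W] iP False by auto
    moreover have "P - {i} \<notin> W"
    proof
      assume "P - {i} \<in> W"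
      then have "insert i (P - {i}) \<in> W" "insert j (P - {i}) \<in> W"
        using monotonic_gameD[OF mon \<open>P - {i} \<in> W\<close>] P iP \<open>j \<in> {1..n}\<close>
        by (simp_all add: insert_absorb subset_eq)
      then show False
        using lose mem_sym_weak_quarrel_neither[OF Pi, of i j W] False by auto
    qed
    ultimately show ?thesis using iP unfolding yes_decisive_def by blast
  qed
qed

lemma finite_orderings: "finite (orderings n)"
proof -
  have "orderings n \<subseteq> {xs. set xs \<subseteq> {1..n} \<and> distinct xs}"
    unfolding orderings_def by auto
  then show ?thesis using finite_subset_distinct[of "{1..n}"] finite_subset by blast
qed

lemma shapley_shubik_mono:
  assumes "\<And>S. S \<subseteq> {1..n} \<Longrightarrow> yes_decisive V i S \<Longrightarrow> yes_decisive W i S"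
  shows "shapley_shubik n V i \<le> shapley_shubik n W i"
proof -
  have "pivotal W i xs" if "xs \<in> orderings n" "pivotal V i xs" for xs
  proof -
    obtain k where k: "k < length xs" "xs ! k = i" "yes_decisive V i (set (take (Suc k) xs))"
      using \<open>pivotal V i xs\<close> unfolding pivotal_def by blast
    have "set (take (Suc k) xs) \<subseteq> {1..n}"
      using \<open>xs \<in> orderings n\<close> set_take_subset[of "Suc k" xs]
      unfolding orderings_def by simp
    then have "yes_decisive W i (set (take (Suc k) xs))" using k(3) by (rule assms)
    with k(1,2) show ?thesis unfolding pivotal_def by blast
  qed
  then have "{xs \<in> orderings n. pivotal V i xs} \<subseteq> {xs \<in> orderings n. pivotal W i xs}"
    by blast
  moreover have "finite {xs \<in> orderings n. pivotal W i xs}"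
    by (rule finite_subset[OF _ finite_orderings]) blast
  ultimately have "card {xs \<in> orderings n. pivotal V i xs} \<le> card {xs \<in> orderings n. pivotal W i xs}"
    by (simp add: card_mono)
  then show ?thesis unfolding shapley_shubik_def by (simp add: divide_right_mono)
qed

theorem theorem14:
  fixes n i j :: nat and W :: "nat set set"
  assumes "monotonic_game n W"
    and "i \<in> {1..n}" and "j \<in> {1..n}" and "i \<noteq> j"
  shows "shapley_shubik n (sym_weak_quarrel n W i j) i \<le> shapley_shubik n W i
       \<and> shapley_shubik n (sym_weak_quarrel n W i j) j \<le> shapley_shubik n W j"
proof
  show "shapley_shubik n (sym_weak_quarrel n W i j) i \<le> shapley_shubik n W i"
    by (rule shapley_shubik_mono, rule yes_decisive_sym_weak_quarrel_imp) (use assms in auto)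
  show "shapley_shubik n (sym_weak_quarrel n W i j) j \<le> shapley_shubik n W j"
    unfolding sym_weak_quarrel_commute[of n W i j]
    by (rule shapley_shubik_mono, rule yes_decisive_sym_weak_quarrel_imp) (use assms in auto)
qed

end
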